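(* Let $(T_1,T_2,T_3)$ be an associative Clifford extension over $(V,S^0,S^1)$ with $\dim V>1$ and $\dim S^0\ge4$. Then there exist pairwise orthogonal nonzero vectors $e_1,e_2,e_3,e_4\in S^0$ such that $e_1(e_2t)=e_3(e_4t)$ for all $t\in T_2$, i.e. the elements $e_1e_2,e_3e_4\in\mathrm{Cl}(S^0)$ act identically on $T_2$.
   Context: All spaces are finite-dimensional real Euclidean. For a Euclidean space $X$, $\mathrm{Cl}(X)$ is the Clifford algebra with $x\cdot x=-|x|^2$; a "$\mathrm{Cl}(X)$-module $Y\oplus Z$" is a $\mathbb Z/2$-graded module with $X\cdot Y\subset Z$, $X\cdot Z\subset Y$, $Y\perp Z$, each $x\in X$ acting skew-symmetrically; the action is written $xy$. Let $V\neq0$ be Euclidean and $S^0\oplus S^1$ a nonzero $\mathrm{Cl}(V)$-module. A Clifford extension over $(V,S^0,S^1)$ is a triple of Euclidean spaces $T_1,T_2,T_3$ of equal dimension together with a $\mathrm{Cl}(V)$-module structure on $T_2\oplus T_3$, a $\mathrm{Cl}(S^0)$-module structure on $T_1\oplus T_2$, and a $\mathrm{Cl}(S^1)$-module structure on $T_1\oplus T_3$. It is associative if $(vs^0)t_1=v(s^0t_1)$ for all $v\in V,s^0\in S^0,t_1\in T_1$. *)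

theory Defs
  imports "HOL-Analysis.Analysis"
begin

text \<open>A Z/2-graded Cl(X)-module Y (+) Z (Y, Z orthogonal summands, realised as separate
  Euclidean types).
  Conditions: the action is bilinear (Cl(X) is an algebra acting linearly),
  x.x = -|x|^2 (Clifford relation), and each x acts skew-symmetrically on Y (+) Z,
  which for the graded action amounts to <x y, z> = - <y, x z>.\<close>

definition clifford_module ::
  "('x::euclidean_space \<Rightarrow> 'y::euclidean_space \<Rightarrow> 'z::euclidean_space)
   \<Rightarrow> ('x \<Rightarrow> 'z \<Rightarrow> 'y) \<Rightarrow> bool" where
  "clifford_module act act' \<longleftrightarrow>
     bilinear act \<and> bilinear act' \<and>
     (\<forall>x y. act' x (act x y) = - ((norm x)\<^sup>2 *\<^sub>R y)) \<and>
     (\<forall>x z. act x (act' x z) = - ((norm x)\<^sup>2 *\<^sub>R z)) \<and>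
     (\<forall>x y z. inner (act x y) z = - inner y (act' x z))"

text \<open>Clifford extension over (V, S0, S1): the Cl(V)-module S0 (+) S1 is given by (vS0, vS1);
  the Cl(V)-module T2 (+) T3 by (vT2, vT3); the Cl(S0)-module T1 (+) T2 by (s0T1, s0T2);
  the Cl(S1)-module T1 (+) T3 by (s1T1, s1T3).\<close>

definition clifford_extension ::
  "('v::euclidean_space \<Rightarrow> 's0::euclidean_space \<Rightarrow> 's1::euclidean_space)
   \<Rightarrow> ('v \<Rightarrow> 's1 \<Rightarrow> 's0)
   \<Rightarrow> ('v \<Rightarrow> 't2::euclidean_space \<Rightarrow> 't3::euclidean_space) \<Rightarrow> ('v \<Rightarrow> 't3 \<Rightarrow> 't2)
   \<Rightarrow> ('s0 \<Rightarrow> 't1::euclidean_space \<Rightarrow> 't2) \<Rightarrow> ('s0 \<Rightarrow> 't2 \<Rightarrow> 't1)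
   \<Rightarrow> ('s1 \<Rightarrow> 't1 \<Rightarrow> 't3) \<Rightarrow> ('s1 \<Rightarrow> 't3 \<Rightarrow> 't1) \<Rightarrow> bool" where
  "clifford_extension vS0 vS1 vT2 vT3 s0T1 s0T2 s1T1 s1T3 \<longleftrightarrow>
     clifford_module vS0 vS1 \<and>
     DIM('t1) = DIM('t2) \<and> DIM('t2) = DIM('t3) \<and>
     clifford_module vT2 vT3 \<and>
     clifford_module s0T1 s0T2 \<and>
     clifford_module s1T1 s1T3"

definition associative_extension ::
  "('v::euclidean_space \<Rightarrow> 's0::euclidean_space \<Rightarrow> 's1::euclidean_space)
   \<Rightarrow> ('v \<Rightarrow> 't2::euclidean_space \<Rightarrow> 't3::euclidean_space)
   \<Rightarrow> ('s0 \<Rightarrow> 't1::euclidean_space \<Rightarrow> 't2)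
   \<Rightarrow> ('s1 \<Rightarrow> 't1 \<Rightarrow> 't3) \<Rightarrow> bool" where
  "associative_extension vS0 vT2 s0T1 s1T1 \<longleftrightarrow>
     (\<forall>v s t. s1T1 (vS0 v s) t = vT2 v (s0T1 s t))"

end

theory Submission
  imports Defs
begin

text \<open>Pick orthonormal \<open>v, w \<in> V\<close>. The element \<open>vw\<close> acts on \<open>S\<^sup>0\<close> as an orthogonal
  skew map \<open>J\<close> and on \<open>T\<^sub>2\<close> as some map \<open>K\<close>; associativity of the extension gives
  \<open>K(s t) = (J s) t\<close> for \<open>s \<in> S\<^sup>0\<close>, \<open>t \<in> T\<^sub>1\<close>. Since \<open>s \<perp> J s\<close>, the Clifford relation then
  yields \<open>s (J s\<cdot>t) = |s|\<^sup>2 K t\<close> on \<open>T\<^sub>2\<close>. Hence for unit vectors \<open>s, s'\<close> with \<open>s' \<perp> s, J s\<close>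
  (possible as \<open>dim S\<^sup>0 \<ge> 4\<close>) the vectors \<open>s, J s, s', J s'\<close> are pairwise orthogonal and
  both \<open>s (J s)\<close> and \<open>s' (J s')\<close> act on \<open>T\<^sub>2\<close> as \<open>K\<close>.\<close>

lemma clifford_moduleD:
  assumes "clifford_module act act'"
  shows "bilinear act" "bilinear act'"
    "\<And>x y. act' x (act x y) = - ((norm x)\<^sup>2 *\<^sub>R y)"
    "\<And>x z. act x (act' x z) = - ((norm x)\<^sup>2 *\<^sub>R z)"
    "\<And>x y z. inner (act x y) z = - inner y (act' x z)"
  using assms unfolding clifford_module_def by auto

lemma clifford_module_anticommute:
  assumes "clifford_module act act'"
  shows "act x (act' y z) + act y (act' x z) = - ((2 * inner x y) *\<^sub>R z)"
proof -
  note cm = clifford_moduleD[OF assms]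
  have "act (x + y) (act' (x + y) z) =
      act x (act' x z) + act x (act' y z) + act y (act' x z) + act y (act' y z)"
    using cm(1,2) by (simp add: bilinear_ladd bilinear_radd)
  moreover have "(norm (x + y))\<^sup>2 = (norm x)\<^sup>2 + 2 * inner x y + (norm y)\<^sup>2"
    by (simp add: power2_norm_eq_inner inner_add inner_commute)
  ultimately show ?thesis
    using cm(4)[of "x + y" z] cm(4)[of x z] cm(4)[of y z] by (simp add: algebra_simps)
qed

lemma clifford_module_norm_act:
  assumes "clifford_module act act'"
  shows "inner (act x y) (act x y') = (norm x)\<^sup>2 * inner y y'"
  using clifford_moduleD(3,5)[OF assms] by simp

lemma clifford_module_norm_act':
  assumes "clifford_module act act'"
  shows "inner (act' x z) (act' x z') = (norm x)\<^sup>2 * inner z z'"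
  using clifford_moduleD(4,5)[OF assms, of x] by (metis inner_minus_left inner_scaleR_left minus_minus)

lemma clifford_module_inner_act_act:
  assumes "clifford_module act act'"
  shows "inner (act x y) (act w y) = inner x w * (norm y)\<^sup>2"
proof -
  have "inner (act (x + w) y) (act (x + w) y) =
      inner (act x y) (act x y) + 2 * inner (act x y) (act w y) + inner (act w y) (act w y)"
    using clifford_moduleD(1)[OF assms] by (simp add: bilinear_ladd inner_add inner_commute)
  moreover have "(norm (x + w))\<^sup>2 = (norm x)\<^sup>2 + 2 * inner x w + (norm w)\<^sup>2"
    by (simp add: power2_norm_eq_inner inner_add inner_commute)
  ultimately show ?thesis
    using clifford_module_norm_act[OF assms, of "x + w" y y]
      clifford_module_norm_act[OF assms, of x y y] clifford_module_norm_act[OF assms, of w y y]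
    by (simp add: algebra_simps power2_norm_eq_inner)
qed

lemma clifford_module_orthogonal_act_swap:
  assumes "clifford_module act act'" "inner x w = 0"
  shows "inner (act x a) (act w b) = - inner (act x b) (act w a)"
proof -
  have "inner (act x (a + b)) (act w (a + b)) =
      inner (act x a) (act w a) + inner (act x a) (act w b) +
      inner (act x b) (act w a) + inner (act x b) (act w b)"
    using clifford_moduleD(1)[OF assms(1)] by (simp add: bilinear_radd inner_add)
  then show ?thesis
    using clifford_module_inner_act_act[OF assms(1)] assms(2) by simp
qed

lemma clifford_module_product_skew:
  assumes "clifford_module act act'" "inner v w = 0"
  shows "inner (act' v (act w a)) b = - inner a (act' v (act w b))"
proof -
  note cm = clifford_moduleD[OF assms(1)]
  have "inner (act' v (act w a)) b = - inner (act v b) (act w a)"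
    using cm(5)[of v b "act w a"] by (simp add: inner_commute)
  moreover have "inner a (act' v (act w b)) = - inner (act v a) (act w b)"
    using cm(5)[of v a "act w b"] by simp
  ultimately show ?thesis
    using clifford_module_orthogonal_act_swap[OF assms, of b a] by simp
qed

lemma clifford_module_product_isometry:
  assumes "clifford_module act act'" "norm v = 1" "norm w = 1"
  shows "inner (act' v (act w a)) (act' v (act w b)) = inner a b"
  using clifford_module_norm_act'[OF assms(1), of v] clifford_module_norm_act[OF assms(1), of w]
    assms(2,3) by simp

text \<open>If \<open>K\<close> intertwines the action of \<open>s\<close> with that of \<open>J s\<close> and \<open>s \<perp> J s\<close>, the
  anticommutation relation of \<open>s\<close> and \<open>J s\<close> turns \<open>s (J s)\<close> into a multiple of \<open>K\<close>.\<close>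

lemma clifford_module_intertwined_product:
  assumes "clifford_module act act'" "linear K"
    and "\<And>y. K (act s y) = act (J s) y" "inner s (J s) = 0"
  shows "act s (act' (J s) z) = (norm s)\<^sup>2 *\<^sub>R K z"
proof -
  note cm = clifford_moduleD[OF assms(1)]
  have "act (J s) (act' s z) = K (act s (act' s z))" using assms(3) by simp
  also have "\<dots> = - ((norm s)\<^sup>2 *\<^sub>R K z)"
    using cm(4) assms(2) by (simp add: linear_scale linear_neg)
  finally have "act (J s) (act' s z) = - ((norm s)\<^sup>2 *\<^sub>R K z)" .
  moreover have "act s (act' (J s) z) + act (J s) (act' s z) = 0"
    using clifford_module_anticommute[OF assms(1), of s "J s" z] assms(4) by simp
  ultimately show ?thesis by (simp add: add_eq_0_iff)
qed

lemma associative_extension_dual: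
  assumes "clifford_module vS0 vS1" "clifford_module vT2 vT3" "bilinear s0T1"
    and assoc: "\<And>v s t. s1T1 (vS0 v s) t = vT2 v (s0T1 s t)"
  shows "vT3 v (s1T1 \<sigma> t) = s0T1 (vS1 v \<sigma>) t"
proof (cases "v = 0")
  case True
  then show ?thesis
    using clifford_moduleD(2)[OF assms(1)] clifford_moduleD(2)[OF assms(2)] assms(3)
    by (simp add: bilinear_lzero)
next
  case False
  note cmS = clifford_moduleD[OF assms(1)]
  have n: "(norm v)\<^sup>2 \<noteq> 0" using False by simp
  define s where "s = (- 1 / (norm v)\<^sup>2) *\<^sub>R vS1 v \<sigma>"
  have "vS0 v s = \<sigma>"
    unfolding s_def using cmS(1) cmS(4)[of v \<sigma>] n by (simp add: bilinear_rmul bilinear_rneg)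
  then have "vT3 v (s1T1 \<sigma> t) = vT3 v (vT2 v (s0T1 s t))" using assoc by metis
  also have "\<dots> = s0T1 (- ((norm v)\<^sup>2 *\<^sub>R s)) t"
    using clifford_moduleD(3)[OF assms(2)] assms(3) by (simp add: bilinear_lmul bilinear_lneg)
  also have "- ((norm v)\<^sup>2 *\<^sub>R s) = vS1 v \<sigma>" unfolding s_def using n by simp
  finally show ?thesis .
qed

lemma skew_isometry_orthonormal_quadruple:
  fixes J :: "'a::euclidean_space \<Rightarrow> 'a"
  assumes skew: "\<And>a b. inner (J a) b = - inner a (J b)"
    and isometry: "\<And>a b. inner (J a) (J b) = inner a b"
    and "DIM('a) \<ge> 4"
  obtains s s' where "norm s = 1" "norm s' = 1"
    "inner s (J s) = 0" "inner s s' = 0" "inner s (J s') = 0"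
    "inner (J s) s' = 0" "inner (J s) (J s') = 0" "inner s' (J s') = 0"
proof -
  have self_orth: "inner a (J a) = 0" for a using skew[of a a] by (simp add: inner_commute)
  obtain s :: 'a where s: "s \<in> Basis" using nonempty_Basis by blast
  have "dim {s, J s} \<le> card {s, J s}" by (rule dim_le_card') simp
  also have "\<dots> \<le> 2" by (simp add: card_insert_le_m1)
  finally have "dim {s, J s} < DIM('a)" using assms(3) by simp
  then obtain y :: 'a where y: "y \<noteq> 0" "\<And>z. z \<in> span {s, J s} \<Longrightarrow> orthogonal y z"
    using orthogonal_to_subspace_exists by blast
  define s' where "s' = (1 / norm y) *\<^sub>R y"
  have "inner s s' = 0" "inner (J s) s' = 0"
    unfolding s'_def using y(2)[of s] y(2)[of "J s"]
    by (auto simp: orthogonal_def span_base inner_commute)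
  moreover have "inner s (J s') = 0" using skew[of s' s] \<open>inner (J s) s' = 0\<close>
    by (simp add: inner_commute)
  moreover have "inner (J s) (J s') = 0" using isometry[of s s'] \<open>inner s s' = 0\<close> by simp
  moreover have "norm s = 1" "norm s' = 1" using s y(1) by (auto simp: s'_def)
  ultimately show ?thesis using that self_orth by blast
qed

theorem mainTheorem8:
  fixes vS0 :: "'v::euclidean_space \<Rightarrow> 's0::euclidean_space \<Rightarrow> 's1::euclidean_space"
    and vS1 :: "'v \<Rightarrow> 's1 \<Rightarrow> 's0"
    and vT2 :: "'v \<Rightarrow> 't2::euclidean_space \<Rightarrow> 't3::euclidean_space"
    and vT3 :: "'v \<Rightarrow> 't3 \<Rightarrow> 't2"
    and s0T1 :: "'s0 \<Rightarrow> 't1::euclidean_space \<Rightarrow> 't2"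
    and s0T2 :: "'s0 \<Rightarrow> 't2 \<Rightarrow> 't1"
    and s1T1 :: "'s1 \<Rightarrow> 't1 \<Rightarrow> 't3"
    and s1T3 :: "'s1 \<Rightarrow> 't3 \<Rightarrow> 't1"
  assumes "clifford_extension vS0 vS1 vT2 vT3 s0T1 s0T2 s1T1 s1T3"
    and "associative_extension vS0 vT2 s0T1 s1T1"
    and "DIM('v) > 1"
    and "DIM('s0) \<ge> 4"
  shows "\<exists>e1 e2 e3 e4 :: 's0.
           e1 \<noteq> 0 \<and> e2 \<noteq> 0 \<and> e3 \<noteq> 0 \<and> e4 \<noteq> 0 \<and>
           inner e1 e2 = 0 \<and> inner e1 e3 = 0 \<and> inner e1 e4 = 0 \<and>
           inner e2 e3 = 0 \<and> inner e2 e4 = 0 \<and> inner e3 e4 = 0 \<and>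
           (\<forall>t :: 't2. s0T1 e1 (s0T2 e2 t) = s0T1 e3 (s0T2 e4 t))"
proof -
  have MS: "clifford_module vS0 vS1" and MT: "clifford_module vT2 vT3"
    and M0: "clifford_module s0T1 s0T2"
    using assms(1) unfolding clifford_extension_def by auto
  have assoc: "\<And>v s t. s1T1 (vS0 v s) t = vT2 v (s0T1 s t)"
    using assms(2) unfolding associative_extension_def by auto
  have "\<not> card (Basis :: 'v set) \<le> Suc 0" using assms(3) by simp
  then obtain v w :: 'v where "v \<in> Basis" "w \<in> Basis" "v \<noteq> w"
    using card_le_Suc0_iff_eq[of "Basis :: 'v set"] by auto
  then have vw: "norm v = 1" "norm w = 1" "inner v w = 0" by (auto simp: inner_not_same_Basis)
  define J where "J s = vS1 v (vS0 w s)" for s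
  define K where "K t = vT3 v (vT2 w t)" for t
  have "linear (vT2 w)" "linear (vT3 v)"
    using clifford_moduleD(1,2)[OF MT] by (simp_all add: bilinear_def)
  then have "linear K"
    unfolding K_def using linear_compose[of "vT2 w" "vT3 v"] by (simp add: o_def)
  moreover have "K (s0T1 s t) = s0T1 (J s) t" for s t
    unfolding K_def J_def using assoc[of w s t, symmetric]
      associative_extension_dual[OF MS MT clifford_moduleD(1)[OF M0] assoc] by simp
  moreover have skew: "inner (J a) b = - inner a (J b)" for a b
    unfolding J_def by (rule clifford_module_product_skew[OF MS vw(3)])
  moreover have "inner s (J s) = 0" for s
    using skew[of s s] by (simp add: inner_commute)
  ultimately have product: "s0T1 s (s0T2 (J s) t) = (norm s)\<^sup>2 *\<^sub>R K t" for s t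
    using clifford_module_intertwined_product[OF M0, where J = J and K = K] by blast
  have isometry: "inner (J a) (J b) = inner a b" for a b
    unfolding J_def using clifford_module_product_isometry[OF MS vw(1,2)] .
  then have norm_J: "norm (J a) = norm a" for a by (simp add: norm_eq_sqrt_inner)
  obtain s s' where unit: "norm s = 1" "norm s' = 1" and orth: "inner s (J s) = 0" "inner s s' = 0"
      "inner s (J s') = 0" "inner (J s) s' = 0" "inner (J s) (J s') = 0" "inner s' (J s') = 0"
    using skew_isometry_orthonormal_quadruple[OF skew isometry assms(4)] by blast
  have "s0T1 s (s0T2 (J s) t) = s0T1 s' (s0T2 (J s') t)" for t
    using product[of s t] product[of s' t] unit by simp
  moreover have "s \<noteq> 0" "J s \<noteq> 0" "s' \<noteq> 0" "J s' \<noteq> 0"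
    using unit norm_J[of s] norm_J[of s'] by auto
  ultimately show ?thesis using orth by blast
qed

end
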